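(* Suppose that $S$ is a finite regular semigroup of minimum cardinality with the property that $S$ possesses a permutation matching but no involution matching. Then $S$ is a $0$-rectangular band.
   Context: For an element $a$ of a semigroup $S$, $V(a)=\{b\in S: aba=a,\ bab=b\}$ is the set of inverses of $a$. A permutation matching of a finite regular semigroup $S$ is a bijection $\phi:S\to S$ with $\phi(a)\in V(a)$ for all $a\in S$. An involution matching is a permutation matching $\phi$ with $\phi\circ\phi=\mathrm{id}_S$. A $0$-rectangular band is a completely $0$-simple semigroup all of whose $\mathscr{H}$-classes are trivial (equivalently, a Rees matrix semigroup $\mathcal{M}^0[\{1\};I,\Lambda;P]$ over the trivial group with a regular sandwich matrix $P$). *)

theory Defs
  imports Main
begin

definition semigroup_on :: "'a set \<Rightarrow> ('a \<Rightarrow> 'a \<Rightarrow> 'a) \<Rightarrow> bool" where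
  "semigroup_on S m \<longleftrightarrow> (\<forall>x\<in>S. \<forall>y\<in>S. m x y \<in> S) \<and>
     (\<forall>x\<in>S. \<forall>y\<in>S. \<forall>z\<in>S. m (m x y) z = m x (m y z))"

definition inverses :: "'a set \<Rightarrow> ('a \<Rightarrow> 'a \<Rightarrow> 'a) \<Rightarrow> 'a \<Rightarrow> 'a set" where
  "inverses S m a = {b \<in> S. m (m a b) a = a \<and> m (m b a) b = b}"

definition regular_sg :: "'a set \<Rightarrow> ('a \<Rightarrow> 'a \<Rightarrow> 'a) \<Rightarrow> bool" where
  "regular_sg S m \<longleftrightarrow> (\<forall>a\<in>S. inverses S m a \<noteq> {})"

definition permutation_matching :: "'a set \<Rightarrow> ('a \<Rightarrow> 'a \<Rightarrow> 'a) \<Rightarrow> ('a \<Rightarrow> 'a) \<Rightarrow> bool" where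
  "permutation_matching S m \<phi> \<longleftrightarrow> bij_betw \<phi> S S \<and> (\<forall>a\<in>S. \<phi> a \<in> inverses S m a)"

definition involution_matching :: "'a set \<Rightarrow> ('a \<Rightarrow> 'a \<Rightarrow> 'a) \<Rightarrow> ('a \<Rightarrow> 'a) \<Rightarrow> bool" where
  "involution_matching S m \<phi> \<longleftrightarrow> permutation_matching S m \<phi> \<and> (\<forall>a\<in>S. \<phi> (\<phi> a) = a)"

definition perm_not_inv :: "'a set \<Rightarrow> ('a \<Rightarrow> 'a \<Rightarrow> 'a) \<Rightarrow> bool" where
  "perm_not_inv S m \<longleftrightarrow> (\<exists>\<phi>. permutation_matching S m \<phi>) \<and> \<not> (\<exists>\<phi>. involution_matching S m \<phi>)"

text \<open>0-rectangular band: S is isomorphic to a Rees matrix semigroup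
M^0[{1}; I, Lambda; P] over the trivial group, with I, Lambda nonempty and P regular
(every row and every column of P has a nonzero entry).  Elements are encoded as
None (the zero) and Some (i, lambda); the product is
(i,lambda)(j,mu) = (i,mu) if P lambda j is nonzero, and 0 otherwise.\<close>
definition rees_mult :: "('l \<Rightarrow> 'i \<Rightarrow> bool) \<Rightarrow> ('i \<times> 'l) option \<Rightarrow> ('i \<times> 'l) option \<Rightarrow> ('i \<times> 'l) option" where
  "rees_mult P x y = (case (x, y) of
      (Some (i, l), Some (j, u)) \<Rightarrow> (if P l j then Some (i, u) else None)
    | _ \<Rightarrow> None)"

definition zero_rectangular_band :: "'a set \<Rightarrow> ('a \<Rightarrow> 'a \<Rightarrow> 'a) \<Rightarrow> bool" where
  "zero_rectangular_band S m \<longleftrightarrow>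
     (\<exists>(I::'a set) (L::'a set) (P::'a \<Rightarrow> 'a \<Rightarrow> bool) (f::'a \<Rightarrow> ('a \<times> 'a) option).
        I \<noteq> {} \<and> L \<noteq> {} \<and>
        (\<forall>l\<in>L. \<exists>i\<in>I. P l i) \<and> (\<forall>i\<in>I. \<exists>l\<in>L. P l i) \<and>
        bij_betw f S (insert None (Some ` (I \<times> L))) \<and>
        (\<forall>x\<in>S. \<forall>y\<in>S. f (m x y) = rees_mult P (f x) (f y)))"

end

(* A permutation matching maps every J-class into itself, and involution matchings of the
   principal factors J^0 of S glue to an involution matching of S.  So some J^0 is again a
   counterexample, and minimality gives |S| <= |J| + 1.  If J = S, every element has a unique
   inverse in its own H-class, which is an involution matching; hence S = J u {z}.  If J were
   closed under multiplication it would be a smaller counterexample, so some product leaves J;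
   then z is a zero and S is completely 0-simple.  Collapsing the H-classes of S yields the
   0-rectangular band B of its Rees coordinates.  All H-classes have the same size, so Hall's
   theorem turns the permutation matching of S into one of B; and an involution matching of B
   lifts to S by sending x to its unique inverse in the H-class prescribed by B.  Thus B is a
   counterexample as well, and minimality forces the H-classes to be trivial: S is isomorphic
   to B. *)

theory Submission
  imports Defs
begin

section \<open>Finite sets and Hall's marriage theorem\<close>

lemma eq_insert_if_card_le_Suc:
  assumes "finite S" "J \<subseteq> S" "J \<noteq> S" "card S \<le> card J + 1"
  shows "\<exists>z. S = insert z J \<and> z \<notin> J"
proof -
  have "card (S - J) = 1"
    using assms card_Diff_subset[of J S] psubset_card_mono[of S J] finite_subset by fastforce
  then obtain z where "S - J = {z}" using card_1_singletonE by blast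
  then show ?thesis using assms(2) by blast
qed

definition hall_condition :: "'i set \<Rightarrow> ('i \<Rightarrow> 'b set) \<Rightarrow> bool" where
  "hall_condition X A \<longleftrightarrow> (\<forall>K\<subseteq>X. card K \<le> card (\<Union>(A ` K)))"

lemma hall_condition_subset: "hall_condition X A \<Longrightarrow> Y \<subseteq> X \<Longrightarrow> hall_condition Y A"
  unfolding hall_condition_def by blast

lemma hall_condition_finite_Union:
  assumes "finite X" and "hall_condition X A" and "K \<subseteq> X"
  shows "finite (\<Union>(A ` K))"
proof -
  have "card {x} \<le> card (\<Union>(A ` {x}))" if "x \<in> X" for x
    using assms(2) that unfolding hall_condition_def by blast
  then have "card {x} \<le> card (A x)" if "x \<in> X" for x
    using that by simp
  then have "finite (A x)" if "x \<in> X" for x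
    using that by (fastforce intro: card_ge_0_finite)
  then show ?thesis
    using assms(1,3) finite_subset by blast
qed

lemma hall_condition_remove_tight:
  assumes fin: "finite X" and hall: "hall_condition X A" and K: "K \<subseteq> X"
    and tight: "card (\<Union>(A ` K)) = card K"
  shows "hall_condition (X - K) (\<lambda>x. A x - \<Union>(A ` K))"
  unfolding hall_condition_def
proof (intro allI impI)
  fix L assume L: "L \<subseteq> X - K"
  have LK: "L \<union> K \<subseteq> X" using L K by blast
  have "finite L" "finite K" using LK fin finite_subset by auto
  moreover have "L \<inter> K = {}" using L by blast
  ultimately have "card L + card K = card (L \<union> K)"
    by (simp add: card_Un_disjoint)
  also have "\<dots> \<le> card (\<Union>(A ` (L \<union> K)))"
    using hall LK unfolding hall_condition_def by blast
  also have "\<dots> = card (\<Union>(A ` (L \<union> K)) - \<Union>(A ` K)) + card K"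
  proof -
    have fin_LK: "finite (\<Union>(A ` (L \<union> K)))" using hall_condition_finite_Union[OF fin hall LK] .
    have sub: "\<Union>(A ` K) \<subseteq> \<Union>(A ` (L \<union> K))" by blast
    have "card (\<Union>(A ` (L \<union> K)) - \<Union>(A ` K)) = card (\<Union>(A ` (L \<union> K))) - card K"
      using card_Diff_subset[OF finite_subset[OF sub fin_LK] sub] tight by simp
    moreover have "card K \<le> card (\<Union>(A ` (L \<union> K)))" using card_mono[OF fin_LK sub] tight by simp
    ultimately show ?thesis by simp
  qed
  also have "\<Union>(A ` (L \<union> K)) - \<Union>(A ` K) = \<Union>((\<lambda>x. A x - \<Union>(A ` K)) ` L)"
    by blast
  finally show "card L \<le> card (\<Union>((\<lambda>x. A x - \<Union>(A ` K)) ` L))" by simp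
qed

lemma hall_condition_remove_point:
  assumes hall: "hall_condition X A" and x0: "x0 \<in> X"
    and slack: "\<And>K. K \<noteq> {} \<Longrightarrow> K \<subset> X \<Longrightarrow> card K < card (\<Union>(A ` K))"
  shows "hall_condition (X - {x0}) (\<lambda>x. A x - {y0})"
  unfolding hall_condition_def
proof (intro allI impI)
  fix L assume L: "L \<subseteq> X - {x0}"
  define U where "U = \<Union>((\<lambda>x. A x - {y0}) ` L)"
  show "card L \<le> card U"
  proof (cases "L = {}")
    case False
    with L x0 have lt: "card L < card (\<Union>(A ` L))" by (intro slack) auto
    then have "finite (\<Union>(A ` L))" by (intro card_ge_0_finite) linarith
    moreover have "U \<subseteq> \<Union>(A ` L)" "\<Union>(A ` L) \<subseteq> insert y0 U" unfolding U_def by blast+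
    ultimately have "finite U" "card (\<Union>(A ` L)) \<le> card (insert y0 U)"
      by (simp_all add: finite_subset card_mono)
    then have "card (\<Union>(A ` L)) \<le> Suc (card U)"
      by (simp add: card_insert_if split: if_splits)
    with lt show ?thesis by simp
  qed simp
qed

lemma inj_on_combine:
  assumes "K \<subseteq> X" and "inj_on g1 K" and "\<forall>x\<in>K. g1 x \<in> A x \<inter> U"
    and "inj_on g2 (X - K)" and "\<forall>x\<in>X - K. g2 x \<in> A x - U"
  shows "\<exists>g. inj_on g X \<and> (\<forall>x\<in>X. g x \<in> A x)"
proof -
  define g where "g x = (if x \<in> K then g1 x else g2 x)" for x
  have "inj_on g K" "inj_on g (X - K)"
    using assms(2,4) by (auto simp: g_def inj_on_def)
  moreover have "g ` K \<inter> g ` (X - K) = {}"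
    using assms(3,5) by (auto simp: g_def)
  moreover have "K - (X - K) = K" "X - K - K = X - K" using assms(1) by auto
  ultimately have "inj_on g (K \<union> (X - K))"
    unfolding inj_on_Un by simp
  moreover have "K \<union> (X - K) = X" using assms(1) by blast
  ultimately show ?thesis
    using assms(3,5) by (intro exI[of _ g]) (auto simp: g_def)
qed

theorem hall_marriage:
  assumes "finite X" and "hall_condition X A"
  shows "\<exists>g. inj_on g X \<and> (\<forall>x\<in>X. g x \<in> A x)"
  using assms
proof (induction "card X" arbitrary: X A rule: less_induct)
  case less
  note fin = less.prems(1) and hall = less.prems(2)
  show ?case
  proof (cases "\<exists>K. K \<noteq> {} \<and> K \<subset> X \<and> card (\<Union>(A ` K)) = card K")
    case True
    then obtain K where K: "K \<noteq> {}" "K \<subset> X" and tight: "card (\<Union>(A ` K)) = card K"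
      by blast
    have "finite K" using K(2) fin finite_subset by blast
    then obtain g1 where "inj_on g1 K" "\<forall>x\<in>K. g1 x \<in> A x"
      using less.hyps[of K A] K(2) fin hall_condition_subset[OF hall] psubset_card_mono by blast
    moreover have "card (X - K) < card X"
      using K fin by (intro psubset_card_mono) auto
    then obtain g2 where "inj_on g2 (X - K)" "\<forall>x\<in>X - K. g2 x \<in> A x - \<Union>(A ` K)"
      using less.hyps[of "X - K" "\<lambda>x. A x - \<Union>(A ` K)"] fin
        hall_condition_remove_tight[OF fin hall psubset_imp_subset[OF K(2)] tight] by blast
    ultimately show ?thesis
      using inj_on_combine[of K X g1 A "\<Union>(A ` K)" g2] K(2) by blast
  next
    case False
    then have slack: "card K < card (\<Union>(A ` K))" if "K \<noteq> {}" "K \<subset> X" for K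
      using that hall unfolding hall_condition_def by (metis le_neq_implies_less psubset_imp_subset)
    show ?thesis
    proof (cases "X = {}")
      case False
      then obtain x0 where x0: "x0 \<in> X" by blast
      then have "card {x0} \<le> card (\<Union>(A ` {x0}))"
        using hall unfolding hall_condition_def by blast
      then obtain y0 where y0: "y0 \<in> A x0" by fastforce
      have "card (X - {x0}) < card X" using fin x0 by (rule card_Diff1_less)
      then obtain g2 where "inj_on g2 (X - {x0})" "\<forall>x\<in>X - {x0}. g2 x \<in> A x - {y0}"
        using less.hyps[of "X - {x0}" "\<lambda>x. A x - {y0}"] fin
          hall_condition_remove_point[OF hall x0 slack] by blast
      then show ?thesis
        using inj_on_combine[of "{x0}" X "\<lambda>_. y0" A "{y0}" g2] x0 y0 by auto
    qed simp
  qed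
qed

section \<open>Matchings under isomorphisms\<close>

lemma semigroup_on_closed: "semigroup_on S m \<Longrightarrow> a \<in> S \<Longrightarrow> b \<in> S \<Longrightarrow> m a b \<in> S"
  by (simp add: semigroup_on_def)

lemma semigroup_on_image:
  assumes sg: "semigroup_on S m" and hom: "\<And>x y. x \<in> S \<Longrightarrow> y \<in> S \<Longrightarrow> h (m x y) = n (h x) (h y)"
  shows "semigroup_on (h ` S) n"
  unfolding semigroup_on_def
proof (intro conjI ballI)
  fix X Y assume "X \<in> h ` S" "Y \<in> h ` S"
  then obtain x y where "x \<in> S" "y \<in> S" "X = h x" "Y = h y" by blast
  then show "n X Y \<in> h ` S"
    using hom semigroup_on_closed[OF sg] by (metis imageI)
next
  fix X Y Z assume "X \<in> h ` S" "Y \<in> h ` S" "Z \<in> h ` S"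
  then obtain x y w where "x \<in> S" "y \<in> S" "w \<in> S" "X = h x" "Y = h y" "Z = h w" by blast
  then show "n (n X Y) Z = n X (n Y Z)"
    using sg hom[symmetric] semigroup_on_closed[OF sg] unfolding semigroup_on_def by metis
qed

lemma inverses_image:
  assumes sg: "semigroup_on S m" and hom: "\<And>x y. x \<in> S \<Longrightarrow> y \<in> S \<Longrightarrow> h (m x y) = n (h x) (h y)"
    and x: "x \<in> S" and y: "y \<in> inverses S m x"
  shows "h y \<in> inverses (h ` S) n (h x)"
proof -
  have "y \<in> S" "m (m x y) x = x" "m (m y x) y = y" using y unfolding inverses_def by auto
  with x show ?thesis
    unfolding inverses_def using hom[symmetric] semigroup_on_closed[OF sg] by auto
qed

lemma regular_sg_image:
  assumes sg: "semigroup_on S m" and hom: "\<And>x y. x \<in> S \<Longrightarrow> y \<in> S \<Longrightarrow> h (m x y) = n (h x) (h y)"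
    and reg: "regular_sg S m"
  shows "regular_sg (h ` S) n"
  using reg inverses_image[where h=h and n=n, OF sg hom] unfolding regular_sg_def by blast

lemma inverses_image_inj:
  assumes sg: "semigroup_on S m" and hom: "\<And>x y. x \<in> S \<Longrightarrow> y \<in> S \<Longrightarrow> h (m x y) = n (h x) (h y)"
    and inj: "inj_on h S" and x: "x \<in> S"
  shows "inverses (h ` S) n (h x) = h ` inverses S m x"
proof
  show "h ` inverses S m x \<subseteq> inverses (h ` S) n (h x)"
    using inverses_image[where h=h and n=n, OF sg hom x] by blast
  show "inverses (h ` S) n (h x) \<subseteq> h ` inverses S m x"
  proof
    fix b' assume b': "b' \<in> inverses (h ` S) n (h x)"
    then obtain y where y: "y \<in> S" "b' = h y" unfolding inverses_def by blast
    have cl: "m (m x y) x \<in> S" "m (m y x) y \<in> S" using x y(1) semigroup_on_closed[OF sg] by auto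
    have "h (m (m x y) x) = h x" "h (m (m y x) y) = h y"
      using b' x y semigroup_on_closed[OF sg] unfolding inverses_def by (simp_all add: hom)
    then have "m (m x y) x = x" "m (m y x) y = y"
      using inj_onD[OF inj] cl x y(1) by blast+
    then show "b' \<in> h ` inverses S m x" using y unfolding inverses_def by blast
  qed
qed

lemma permutation_matching_image:
  assumes sg: "semigroup_on S m" and hom: "\<And>x y. x \<in> S \<Longrightarrow> y \<in> S \<Longrightarrow> h (m x y) = n (h x) (h y)"
    and inj: "inj_on h S" and \<phi>: "permutation_matching S m \<phi>"
  shows "permutation_matching (h ` S) n (h \<circ> \<phi> \<circ> inv_into S h)"
proof -
  have "bij_betw \<phi> S S" using \<phi> unfolding permutation_matching_def by blast
  then have "bij_betw (h \<circ> \<phi> \<circ> inv_into S h) (h ` S) (h ` S)"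
    using inj by (meson bij_betw_imageI bij_betw_inv_into bij_betw_trans)
  moreover have "(h \<circ> \<phi> \<circ> inv_into S h) y \<in> inverses (h ` S) n y" if "y \<in> h ` S" for y
  proof -
    obtain x where x: "x \<in> S" "y = h x" using \<open>y \<in> h ` S\<close> by blast
    then have "\<phi> x \<in> inverses S m x" using \<phi> unfolding permutation_matching_def by blast
    then show ?thesis using x inj inverses_image_inj[where h=h and n=n, OF sg hom inj x(1)] by simp
  qed
  ultimately show ?thesis unfolding permutation_matching_def by blast
qed

lemma involution_matching_image:
  assumes sg: "semigroup_on S m" and hom: "\<And>x y. x \<in> S \<Longrightarrow> y \<in> S \<Longrightarrow> h (m x y) = n (h x) (h y)"
    and inj: "inj_on h S" and \<phi>: "involution_matching S m \<phi>"
  shows "involution_matching (h ` S) n (h \<circ> \<phi> \<circ> inv_into S h)"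
proof -
  have "\<phi> ` S \<subseteq> S" "\<forall>x\<in>S. \<phi> (\<phi> x) = x"
    using \<phi> bij_betw_imp_surj_on
    unfolding involution_matching_def permutation_matching_def by blast+
  then have "\<forall>y\<in>h ` S. (h \<circ> \<phi> \<circ> inv_into S h) ((h \<circ> \<phi> \<circ> inv_into S h) y) = y"
    using inj by auto
  with \<phi> show ?thesis
    using permutation_matching_image[where h=h and n=n, OF sg hom inj]
    unfolding involution_matching_def by blast
qed

lemma involution_matchingI:
  assumes "\<And>x. x \<in> S \<Longrightarrow> \<psi> x \<in> inverses S m x" and "\<And>x. x \<in> S \<Longrightarrow> \<psi> (\<psi> x) = x"
  shows "involution_matching S m \<psi>"
proof -
  have "\<psi> x \<in> S" if "x \<in> S" for x using assms(1)[OF that] unfolding inverses_def by blast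
  then have "bij_betw \<psi> S S"
    using assms(2) by (intro bij_betw_byWitness[of S \<psi> \<psi>]) auto
  with assms show ?thesis unfolding involution_matching_def permutation_matching_def by blast
qed

lemma perm_not_inv_image:
  assumes sg: "semigroup_on S m" and hom: "\<And>x y. x \<in> S \<Longrightarrow> y \<in> S \<Longrightarrow> h (m x y) = n (h x) (h y)"
    and inj: "inj_on h S" and pni: "perm_not_inv S m"
  shows "perm_not_inv (h ` S) n"
proof -
  define g where "g = inv_into S h"
  have inv_props: "g ` h ` S = S" "inj_on g (h ` S)"
    using inj by (simp_all add: g_def inj_on_inv_into)
  have hom_inv: "g (n x y) = m (g x) (g y)" if "x \<in> h ` S" "y \<in> h ` S" for x y
    using that inj semigroup_on_closed[OF sg] by (auto simp: g_def hom[symmetric])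
  have "\<not> (\<exists>\<chi>. involution_matching (h ` S) n \<chi>)"
    using involution_matching_image[where h=g and n=m,
        OF semigroup_on_image[where h=h and n=n, OF sg hom] hom_inv inv_props(2)]
      inv_props(1) pni
    unfolding perm_not_inv_def by metis
  then show ?thesis
    using permutation_matching_image[where h=h and n=n, OF sg hom inj] pni
    unfolding perm_not_inv_def by blast
qed

lemma card_le_if_minimal:
  fixes T :: "'b set"
  assumes "finite T" and sg: "semigroup_on T n" and "regular_sg T n" and "perm_not_inv T n"
    and minimal: "\<And>(T :: nat set) (n :: nat \<Rightarrow> nat \<Rightarrow> nat).
        finite T \<Longrightarrow> semigroup_on T n \<Longrightarrow> regular_sg T n \<Longrightarrow> perm_not_inv T n \<Longrightarrow> c \<le> card T"
  shows "c \<le> card T"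
proof -
  obtain h :: "'b \<Rightarrow> nat" where inj: "inj_on h T"
    using \<open>finite T\<close> finite_imp_inj_to_nat_seg by blast
  define n' where "n' a b = h (n (inv_into T h a) (inv_into T h b))" for a b
  have hom: "h (n x y) = n' (h x) (h y)" if "x \<in> T" "y \<in> T" for x y
    using that inj by (simp add: n'_def)
  have "c \<le> card (h ` T)"
    using assms semigroup_on_image[where h=h and n=n', OF sg hom]
      regular_sg_image[where h=h and n=n', OF sg hom]
      perm_not_inv_image[where h=h and n=n', OF sg hom inj] by blast
  then show ?thesis using card_image[OF inj] by simp
qed

section \<open>Green's relations in finite regular semigroups\<close>

locale finite_regular_semigroup =
  fixes S :: "'a set" and m :: "'a \<Rightarrow> 'a \<Rightarrow> 'a" (infixl "\<cdot>" 70)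
  assumes finite: "finite S" and semigroup: "semigroup_on S m" and regular: "regular_sg S m"
begin

lemma closed [simp, intro]: "a \<in> S \<Longrightarrow> b \<in> S \<Longrightarrow> a \<cdot> b \<in> S"
  using semigroup unfolding semigroup_on_def by blast

lemma assoc [simp]: "a \<in> S \<Longrightarrow> b \<in> S \<Longrightarrow> c \<in> S \<Longrightarrow> a \<cdot> b \<cdot> c = a \<cdot> (b \<cdot> c)"
  using semigroup unfolding semigroup_on_def by blast

lemma inverses_iff: "b \<in> inverses S m a \<longleftrightarrow> b \<in> S \<and> a \<cdot> b \<cdot> a = a \<and> b \<cdot> a \<cdot> b = b"
  unfolding inverses_def by blast

lemma inverse_exists: "a \<in> S \<Longrightarrow> \<exists>b. b \<in> inverses S m a"
  using regular unfolding regular_sg_def by blast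

lemma inverses_sym: "a \<in> S \<Longrightarrow> b \<in> inverses S m a \<Longrightarrow> a \<in> inverses S m b"
  unfolding inverses_def by blast

lemma right_unit_exists: "a \<in> S \<Longrightarrow> \<exists>s\<in>S. a = a \<cdot> s"
  using inverse_exists unfolding inverses_iff by (metis assoc closed)

lemma left_unit_exists: "a \<in> S \<Longrightarrow> \<exists>s\<in>S. a = s \<cdot> a"
  using inverse_exists unfolding inverses_iff by (metis closed)

text \<open>The preorders are defined without adjoining an identity (\<open>a \<in> b S\<close> rather than
  \<open>a \<in> b S\<^sup>1\<close>); by regularity this makes no difference, as \<open>b \<in> b S \<inter> S b\<close>.\<close>

definition R_le :: "'a \<Rightarrow> 'a \<Rightarrow> bool" where "R_le a b \<longleftrightarrow> (\<exists>s\<in>S. a = b \<cdot> s)"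
definition L_le :: "'a \<Rightarrow> 'a \<Rightarrow> bool" where "L_le a b \<longleftrightarrow> (\<exists>s\<in>S. a = s \<cdot> b)"
definition J_le :: "'a \<Rightarrow> 'a \<Rightarrow> bool" where "J_le a b \<longleftrightarrow> (\<exists>u\<in>S. \<exists>v\<in>S. a = u \<cdot> b \<cdot> v)"
definition R_rel :: "'a \<Rightarrow> 'a \<Rightarrow> bool" where "R_rel a b \<longleftrightarrow> R_le a b \<and> R_le b a"
definition L_rel :: "'a \<Rightarrow> 'a \<Rightarrow> bool" where "L_rel a b \<longleftrightarrow> L_le a b \<and> L_le b a"
definition H_rel :: "'a \<Rightarrow> 'a \<Rightarrow> bool" where "H_rel a b \<longleftrightarrow> R_rel a b \<and> L_rel a b"
definition J_class :: "'a \<Rightarrow> 'a set" where "J_class c = {b \<in> S. J_le b c \<and> J_le c b}"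

lemma R_le_refl: "a \<in> S \<Longrightarrow> R_le a a"
  unfolding R_le_def using right_unit_exists by blast

lemma L_le_refl: "a \<in> S \<Longrightarrow> L_le a a"
  unfolding L_le_def using left_unit_exists by blast

lemma R_le_trans: "a \<in> S \<Longrightarrow> b \<in> S \<Longrightarrow> c \<in> S \<Longrightarrow> R_le a b \<Longrightarrow> R_le b c \<Longrightarrow> R_le a c"
  unfolding R_le_def by (metis assoc closed)

lemma L_le_trans: "a \<in> S \<Longrightarrow> b \<in> S \<Longrightarrow> c \<in> S \<Longrightarrow> L_le a b \<Longrightarrow> L_le b c \<Longrightarrow> L_le a c"
  unfolding L_le_def by (metis assoc closed)

lemma J_le_trans: "a \<in> S \<Longrightarrow> b \<in> S \<Longrightarrow> c \<in> S \<Longrightarrow> J_le a b \<Longrightarrow> J_le b c \<Longrightarrow> J_le a c"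
  unfolding J_le_def by (metis assoc closed)

lemma R_le_imp_J_le: "b \<in> S \<Longrightarrow> R_le a b \<Longrightarrow> J_le a b"
  unfolding R_le_def J_le_def using left_unit_exists by metis

lemma L_le_imp_J_le: "b \<in> S \<Longrightarrow> L_le a b \<Longrightarrow> J_le a b"
  unfolding L_le_def J_le_def using right_unit_exists by (metis closed)

lemma J_le_refl: "a \<in> S \<Longrightarrow> J_le a a"
  using R_le_imp_J_le R_le_refl by blast

lemma J_le_mult_right: "a \<in> S \<Longrightarrow> b \<in> S \<Longrightarrow> J_le (a \<cdot> b) a"
  by (intro R_le_imp_J_le) (auto simp: R_le_def)

lemma J_le_mult_left: "a \<in> S \<Longrightarrow> b \<in> S \<Longrightarrow> J_le (a \<cdot> b) b"
  by (intro L_le_imp_J_le) (auto simp: L_le_def)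

lemma R_rel_refl: "a \<in> S \<Longrightarrow> R_rel a a"
  unfolding R_rel_def using R_le_refl by blast

lemma L_rel_refl: "a \<in> S \<Longrightarrow> L_rel a a"
  unfolding L_rel_def using L_le_refl by blast

lemma R_rel_sym: "R_rel a b \<Longrightarrow> R_rel b a"
  unfolding R_rel_def by blast

lemma L_rel_sym: "L_rel a b \<Longrightarrow> L_rel b a"
  unfolding L_rel_def by blast

lemma R_rel_trans: "a \<in> S \<Longrightarrow> b \<in> S \<Longrightarrow> c \<in> S \<Longrightarrow> R_rel a b \<Longrightarrow> R_rel b c \<Longrightarrow> R_rel a c"
  unfolding R_rel_def using R_le_trans by blast

lemma L_rel_trans: "a \<in> S \<Longrightarrow> b \<in> S \<Longrightarrow> c \<in> S \<Longrightarrow> L_rel a b \<Longrightarrow> L_rel b c \<Longrightarrow> L_rel a c"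
  unfolding L_rel_def using L_le_trans by blast

lemma H_rel_refl: "a \<in> S \<Longrightarrow> H_rel a a"
  unfolding H_rel_def using R_rel_refl L_rel_refl by blast

lemma H_rel_trans: "a \<in> S \<Longrightarrow> b \<in> S \<Longrightarrow> c \<in> S \<Longrightarrow> H_rel a b \<Longrightarrow> H_rel b c \<Longrightarrow> H_rel a c"
  unfolding H_rel_def using R_rel_trans[of a b c] L_rel_trans[of a b c] by blast

text \<open>\<open>spow w k\<close> is the power \<open>w\<^sup>k\<^sup>+\<^sup>1\<close>; there is no identity to serve as \<open>w\<^sup>0\<close>.\<close>

fun spow :: "'a \<Rightarrow> nat \<Rightarrow> 'a" where
  "spow w 0 = w"
| "spow w (Suc k) = w \<cdot> spow w k"

lemma spow_closed [simp]: "w \<in> S \<Longrightarrow> spow w k \<in> S"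
  by (induction k) auto

lemma spow_add: "w \<in> S \<Longrightarrow> spow w (Suc (i + j)) = spow w i \<cdot> spow w j"
  by (induction i) auto

lemma spow_Suc_right: "w \<in> S \<Longrightarrow> spow w (Suc k) = spow w k \<cdot> w"
  using spow_add[of w k 0] by simp

lemma spow_eventually_periodic: "w \<in> S \<Longrightarrow> \<exists>p k. spow w p = spow w (Suc (p + k))"
proof -
  assume w: "w \<in> S"
  have "finite (range (spow w))"
    using w finite finite_subset by (metis image_subsetI spow_closed)
  then have "\<not> inj (spow w)"
    using finite_imageD infinite_UNIV_nat by blast
  then obtain p q where "p < q" "spow w p = spow w q"
    unfolding inj_def by (metis linorder_neqE_nat)
  then show ?thesis
    using less_imp_Suc_add by metis
qed

text \<open>Iterating \<open>b = x b w\<close> gives \<open>b = x\<^sup>n b w\<^sup>n\<close>; since the powers of \<open>w\<close> are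
  eventually periodic, \<open>b\<close> is fixed by right multiplication with a power of \<open>w\<close>.\<close>

lemma right_absorb:
  assumes x: "x \<in> S" and b: "b \<in> S" and w: "w \<in> S" and eq: "b = x \<cdot> b \<cdot> w"
  shows "\<exists>t\<in>S. b = b \<cdot> w \<cdot> t"
proof -
  have iter: "b = spow x n \<cdot> b \<cdot> spow w n" for n
  proof (induction n)
    case 0
    show ?case by (simp only: spow.simps(1) eq[symmetric])
  next
    case (Suc n)
    have "spow x (Suc n) \<cdot> b \<cdot> spow w (Suc n) = x \<cdot> (spow x n \<cdot> b \<cdot> spow w n) \<cdot> w"
      using x b w by (simp del: spow.simps(2) add: spow_Suc_right spow.simps(2)[of x])
    also have "\<dots> = b" by (simp only: Suc.IH[symmetric] eq[symmetric])
    finally show ?case by (rule sym)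
  qed
  obtain p k where pk: "spow w p = spow w (Suc (p + k))"
    using spow_eventually_periodic[OF w] by blast
  have per: "spow w p = spow w p \<cdot> spow w k"
    by (rule trans[OF pk spow_add[OF w]])
  have "b = spow x p \<cdot> b \<cdot> (spow w p \<cdot> spow w k)"
    unfolding per[symmetric] by (rule iter)
  also have "\<dots> = (spow x p \<cdot> b \<cdot> spow w p) \<cdot> spow w k"
    using x b w by simp
  also have "\<dots> = b \<cdot> spow w k"
    by (simp only: iter[of p, symmetric])
  finally have bk: "b = b \<cdot> spow w k" .
  have "b = b \<cdot> spow w k \<cdot> spow w k"
    by (simp only: bk[symmetric])
  also have "\<dots> = b \<cdot> (spow w k \<cdot> spow w k)"
    using b w by simp
  also have "\<dots> = b \<cdot> w \<cdot> spow w (k + k)"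
    using b w spow_add[OF w, of k k] by simp
  finally show ?thesis using spow_closed[OF w] by blast
qed

lemma left_absorb:
  assumes y: "y \<in> S" and b: "b \<in> S" and w: "w \<in> S" and eq: "b = w \<cdot> b \<cdot> y"
  shows "\<exists>t\<in>S. b = t \<cdot> w \<cdot> b"
proof -
  have iter: "b = spow w n \<cdot> b \<cdot> spow y n" for n
  proof (induction n)
    case 0
    show ?case by (simp only: spow.simps(1) eq[symmetric])
  next
    case (Suc n)
    have "spow w (Suc n) \<cdot> b \<cdot> spow y (Suc n) = w \<cdot> (spow w n \<cdot> b \<cdot> spow y n) \<cdot> y"
      using y b w by (simp del: spow.simps(2) add: spow_Suc_right[of y] spow.simps(2)[of w])
    also have "\<dots> = b" by (simp only: Suc.IH[symmetric] eq[symmetric])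
    finally show ?case by (rule sym)
  qed
  obtain p k where pk: "spow w p = spow w (Suc (k + p))"
    using spow_eventually_periodic[OF w] by (metis add.commute)
  have per: "spow w p = spow w k \<cdot> spow w p"
    by (rule trans[OF pk spow_add[OF w]])
  have "b = (spow w k \<cdot> spow w p) \<cdot> b \<cdot> spow y p"
    unfolding per[symmetric] by (rule iter)
  also have "\<dots> = spow w k \<cdot> (spow w p \<cdot> b \<cdot> spow y p)"
    using y b w by simp
  also have "\<dots> = spow w k \<cdot> b"
    by (simp only: iter[of p, symmetric])
  finally have bk: "b = spow w k \<cdot> b" .
  have "b = spow w k \<cdot> (spow w k \<cdot> b)"
    by (simp only: bk[symmetric])
  also have "\<dots> = (spow w k \<cdot> spow w k) \<cdot> b"
    using b w by simp
  also have "\<dots> = spow w (k + k) \<cdot> w \<cdot> b"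
    using spow_add[OF w, of k k] spow_Suc_right[OF w, of "k + k"] by simp
  finally show ?thesis using spow_closed[OF w] by blast
qed

lemma R_le_stable:
  assumes a: "a \<in> S" and b: "b \<in> S" and J: "J_le b a" and R: "R_le a b"
  shows "R_le b a"
proof -
  obtain u where u: "u \<in> S" "a = b \<cdot> u" using R R_le_def by blast
  obtain x y where x: "x \<in> S" and y: "y \<in> S" and bxay: "b = x \<cdot> a \<cdot> y" using J J_le_def by blast
  have "x \<cdot> a \<cdot> y = x \<cdot> b \<cdot> (u \<cdot> y)" using u x y b by simp
  with bxay have "b = x \<cdot> b \<cdot> (u \<cdot> y)" by (rule trans)
  then obtain t where t: "t \<in> S" "b = b \<cdot> (u \<cdot> y) \<cdot> t"
    using right_absorb[OF x b] u(1) y by blast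
  have "b \<cdot> (u \<cdot> y) \<cdot> t = a \<cdot> (y \<cdot> t)" using u y b t(1) by simp
  with t show ?thesis unfolding R_le_def using y by auto
qed

lemma L_le_stable:
  assumes a: "a \<in> S" and b: "b \<in> S" and J: "J_le b a" and L: "L_le a b"
  shows "L_le b a"
proof -
  obtain u where u: "u \<in> S" "a = u \<cdot> b" using L L_le_def by blast
  obtain x y where x: "x \<in> S" and y: "y \<in> S" and bxay: "b = x \<cdot> a \<cdot> y" using J J_le_def by blast
  have "x \<cdot> a \<cdot> y = (x \<cdot> u) \<cdot> b \<cdot> y" using u x y b by simp
  with bxay have "b = (x \<cdot> u) \<cdot> b \<cdot> y" by (rule trans)
  then obtain t where t: "t \<in> S" "b = t \<cdot> (x \<cdot> u) \<cdot> b"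
    using left_absorb[OF y b] u(1) x by blast
  have "t \<cdot> (x \<cdot> u) \<cdot> b = (t \<cdot> x) \<cdot> a" using u x b t(1) by simp
  with t show ?thesis unfolding L_le_def using x by auto
qed

lemma inverse_J_le: "x \<in> S \<Longrightarrow> y \<in> inverses S m x \<Longrightarrow> J_le x y"
  unfolding inverses_iff J_le_def by metis

lemma inverse_in_H_class:
  assumes x: "x \<in> S" and w: "w \<in> S" and "J_le w x" "J_le x (x \<cdot> w)" "J_le x (w \<cdot> x)"
  shows "\<exists>y \<in> inverses S m x. H_rel y w"
proof -
  have "R_le x (x \<cdot> w)" using R_le_stable[of "x \<cdot> w" x] assms R_le_def by blast
  then obtain v where v: "v \<in> S" "x = x \<cdot> w \<cdot> v" using R_le_def by blast
  have "L_le x (w \<cdot> x)" using L_le_stable[of "w \<cdot> x" x] assms L_le_def by blast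
  then obtain u where u: "u \<in> S" "x = u \<cdot> w \<cdot> x" using L_le_def x w by auto
  obtain x' where x': "x' \<in> inverses S m x" using inverse_exists[OF x] by blast
  then have x'S: "x' \<in> S" and xx'x: "x \<cdot> x' \<cdot> x = x" unfolding inverses_iff by auto
  \<comment> \<open>\<open>y1\<close> is an inner inverse of \<open>x\<close> in \<open>w S \<inter> S w\<close>, and \<open>y1 x y1\<close> then an inverse.\<close>
  define y1 where "y1 = w \<cdot> v \<cdot> x' \<cdot> u \<cdot> w"
  have y1: "y1 \<in> S" using y1_def w v(1) u(1) x'S by simp
  have "x \<cdot> y1 \<cdot> x = (x \<cdot> w \<cdot> v) \<cdot> x' \<cdot> (u \<cdot> w \<cdot> x)"
    using x w v(1) u(1) x'S by (simp add: y1_def)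
  also have "\<dots> = x" using v(2)[symmetric] u(2)[symmetric] xx'x by simp
  finally have xy1x: "x \<cdot> y1 \<cdot> x = x" .
  define y where "y = y1 \<cdot> x \<cdot> y1"
  have y: "y \<in> S" using y_def x y1 by simp
  have inv: "y \<in> inverses S m x"
    unfolding inverses_iff using x y1 y xy1x by (simp add: y_def) (metis assoc closed)
  have "J_le w y" using J_le_trans[OF w x y] \<open>J_le w x\<close> inverse_J_le[OF x inv] by blast
  moreover have "y = w \<cdot> (v \<cdot> x' \<cdot> u \<cdot> w \<cdot> x \<cdot> y1)"
    using x y1 w v(1) u(1) x'S by (simp add: y_def y1_def)
  then have "R_le y w" unfolding R_le_def using x y1 w v(1) u(1) x'S by auto
  moreover have "y = (y1 \<cdot> x \<cdot> w \<cdot> v \<cdot> x' \<cdot> u) \<cdot> w"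
    using x y1 w v(1) u(1) x'S by (simp add: y_def y1_def)
  then have "L_le y w" unfolding L_le_def using x y1 w v(1) u(1) x'S by (metis closed)
  ultimately have "H_rel y w"
    unfolding H_rel_def R_rel_def L_rel_def using R_le_stable L_le_stable y w by blast
  with inv show ?thesis by blast
qed

lemma inverse_unique_in_H_class:
  assumes x: "x \<in> S" and y: "y \<in> inverses S m x" and y': "y' \<in> inverses S m x"
    and H: "H_rel y' y"
  shows "y' = y"
proof -
  obtain s where s: "s \<in> S" "y' = y \<cdot> s" using H unfolding H_rel_def R_rel_def R_le_def by blast
  obtain t where t: "t \<in> S" "y' = t \<cdot> y" using H unfolding H_rel_def L_rel_def L_le_def by blast
  have yS: "y \<in> S" and yxy: "y \<cdot> x \<cdot> y = y" and xy'x: "x \<cdot> y' \<cdot> x = x"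
    using y y' unfolding inverses_iff by auto
  have "y \<cdot> x \<cdot> y' = y'" using s yS x yxy by (metis assoc closed)
  moreover have "y' \<cdot> x \<cdot> y = y'" using t yS x yxy by (metis assoc closed)
  moreover have "y = y \<cdot> (x \<cdot> y' \<cdot> x) \<cdot> y" using xy'x yxy by simp
  ultimately show ?thesis
    using yS x y' unfolding inverses_iff by (metis assoc closed)
qed

lemma involution_matching_if_H_inverse:
  assumes inv: "\<And>x. x \<in> S \<Longrightarrow> \<psi> x \<in> inverses S m x"
    and H: "\<And>x. x \<in> S \<Longrightarrow> H_rel (\<psi> (\<psi> x)) x"
  shows "involution_matching S m \<psi>"
proof -
  have closed: "\<psi> x \<in> S" if "x \<in> S" for x using inv[OF that] unfolding inverses_iff by blast
  have invol: "\<psi> (\<psi> x) = x" if x: "x \<in> S" for x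
    using inverse_unique_in_H_class[OF closed[OF x] inverses_sym[OF x inv[OF x]]
        inv[OF closed[OF x]] H[OF x]] .
  show ?thesis
    by (rule involution_matchingI) (simp_all add: inv invol)
qed

lemma simple_has_involution_matching:
  assumes "\<forall>x\<in>S. \<forall>y\<in>S. J_le x y"
  shows "\<exists>\<psi>. involution_matching S m \<psi>"
proof -
  have "\<exists>y. y \<in> inverses S m x \<and> H_rel y x" if "x \<in> S" for x
    using inverse_in_H_class[OF that that] assms that by auto
  then obtain \<psi> where \<psi>: "\<And>x. x \<in> S \<Longrightarrow> \<psi> x \<in> inverses S m x \<and> H_rel (\<psi> x) x"
    by metis
  have "H_rel (\<psi> (\<psi> x)) x" if "x \<in> S" for x
    using \<psi> that H_rel_trans unfolding inverses_iff by meson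
  then show ?thesis
    using involution_matching_if_H_inverse \<psi> by blast
qed

end

section \<open>Principal factors\<close>

definition principal_factor :: "'a set \<Rightarrow> 'a option set" where
  "principal_factor J = insert None (Some ` J)"

lemma card_principal_factor: "finite J \<Longrightarrow> card (principal_factor J) = card J + 1"
  unfolding principal_factor_def by (simp add: card_image)

context finite_regular_semigroup
begin

definition pf_mult :: "'a set \<Rightarrow> 'a option \<Rightarrow> 'a option \<Rightarrow> 'a option" where
  "pf_mult J x y = (case (x, y) of
      (Some a, Some b) \<Rightarrow> if a \<cdot> b \<in> J then Some (a \<cdot> b) else None
    | _ \<Rightarrow> None)"

lemma pf_mult_simps [simp]:
  "pf_mult J None y = None" "pf_mult J x None = None"
  "pf_mult J (Some a) (Some b) = (if a \<cdot> b \<in> J then Some (a \<cdot> b) else None)"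
  unfolding pf_mult_def by (auto split: option.split)

lemma J_class_subset: "J_class c \<subseteq> S"
  unfolding J_class_def by auto

lemma J_class_self: "c \<in> S \<Longrightarrow> c \<in> J_class c"
  unfolding J_class_def using J_le_refl by auto

lemma J_class_eq: "c \<in> S \<Longrightarrow> y \<in> J_class c \<Longrightarrow> J_class y = J_class c"
  unfolding J_class_def using J_le_trans by blast

lemma J_class_J_le: "c \<in> S \<Longrightarrow> x \<in> J_class c \<Longrightarrow> y \<in> J_class c \<Longrightarrow> J_le x y"
  unfolding J_class_def using J_le_trans by blast

lemma J_class_convex:
  assumes "c \<in> S" "x \<in> J_class c" "y \<in> J_class c" "e \<in> S" "J_le x e" "J_le e y"
  shows "e \<in> J_class c"
  using assms J_le_trans unfolding J_class_def by blast

lemma inverse_in_J_class: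
  assumes c: "c \<in> S" and x: "x \<in> J_class c" and y: "y \<in> inverses S m x"
  shows "y \<in> J_class c" "x \<cdot> y \<in> J_class c" "y \<cdot> x \<in> J_class c"
proof -
  have xS: "x \<in> S" using x J_class_subset by auto
  have yS: "y \<in> S" and xyx: "x \<cdot> y \<cdot> x = x" using y unfolding inverses_iff by auto
  have "J_le x y" "J_le y x"
    using inverse_J_le xS y inverses_sym[OF xS y] yS by blast+
  then show "y \<in> J_class c" using J_class_convex[OF c x x yS] by blast
  have "R_le x (x \<cdot> y)" unfolding R_le_def using xyx[symmetric] xS by blast
  then have "J_le x (x \<cdot> y)" using R_le_imp_J_le xS yS by blast
  then show "x \<cdot> y \<in> J_class c" using J_class_convex[OF c x x] J_le_mult_right xS yS by auto
  have "x = x \<cdot> (y \<cdot> x)" using xyx xS yS by simp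
  then have "L_le x (y \<cdot> x)" unfolding L_le_def using xS by blast
  then have "J_le x (y \<cdot> x)" using L_le_imp_J_le xS yS by blast
  then show "y \<cdot> x \<in> J_class c" using J_class_convex[OF c x x] J_le_mult_left xS yS by auto
qed

lemma principal_factor_semigroup:
  assumes c: "c \<in> S"
  shows "semigroup_on (principal_factor (J_class c)) (pf_mult (J_class c))"
proof -
  let ?J = "J_class c"
  have "pf_mult ?J (pf_mult ?J (Some x) (Some y)) (Some z) =
      pf_mult ?J (Some x) (pf_mult ?J (Some y) (Some z))"
    if xyz: "x \<in> ?J" "y \<in> ?J" "z \<in> ?J" for x y z
  proof -
    have S: "x \<in> S" "y \<in> S" "z \<in> S" using xyz J_class_subset by auto
    show ?thesis
    proof (cases "x \<cdot> y \<cdot> z \<in> ?J")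
      case True
      have "x \<cdot> y \<in> ?J"
        using J_class_convex[OF c True xyz(1)] S J_le_mult_right[of "x \<cdot> y" z]
          J_le_mult_right[of x y] by auto
      moreover have "y \<cdot> z \<in> ?J"
        using J_class_convex[OF c True xyz(2)] S J_le_mult_left[of x "y \<cdot> z"]
          J_le_mult_right[of y z] by auto
      ultimately show ?thesis using True S by simp
    qed (use S in auto)
  qed
  then show ?thesis
    unfolding semigroup_on_def principal_factor_def by (auto split: if_splits)
qed

lemma principal_factor_inverses_None: "inverses (principal_factor J) (pf_mult J) None = {None}"
  unfolding inverses_def principal_factor_def by auto

lemma principal_factor_inverses_Some:
  assumes c: "c \<in> S" and x: "x \<in> J_class c"
  shows "inverses (principal_factor (J_class c)) (pf_mult (J_class c)) (Some x) =
    Some ` inverses S m x"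
proof (intro equalityI subsetI)
  let ?J = "J_class c"
  fix Y assume Y: "Y \<in> inverses (principal_factor ?J) (pf_mult ?J) (Some x)"
  then obtain y where y: "Y = Some y" "y \<in> ?J" unfolding inverses_def principal_factor_def by auto
  with Y have "x \<cdot> y \<cdot> x = x" "y \<cdot> x \<cdot> y = y" unfolding inverses_def by (auto split: if_splits)
  then have "y \<in> inverses S m x"
    using y(2) subsetD[OF J_class_subset] unfolding inverses_iff by blast
  then show "Y \<in> Some ` inverses S m x" using y(1) by blast
next
  let ?J = "J_class c"
  fix Y assume "Y \<in> Some ` inverses S m x"
  then obtain y where y: "Y = Some y" "y \<in> inverses S m x" by auto
  then show "Y \<in> inverses (principal_factor ?J) (pf_mult ?J) (Some x)"
    using inverse_in_J_class[OF c x y(2)] x unfolding inverses_def principal_factor_def by auto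
qed

lemma principal_factor_regular:
  assumes c: "c \<in> S"
  shows "regular_sg (principal_factor (J_class c)) (pf_mult (J_class c))"
  unfolding regular_sg_def
proof
  fix X assume "X \<in> principal_factor (J_class c)"
  then consider "X = None" | x where "X = Some x" "x \<in> J_class c"
    unfolding principal_factor_def by blast
  then show "inverses (principal_factor (J_class c)) (pf_mult (J_class c)) X \<noteq> {}"
  proof cases
    case 2
    then have "inverses S m x \<noteq> {}" using inverse_exists J_class_subset by blast
    then show ?thesis using principal_factor_inverses_Some[OF c 2(2)] 2(1) by simp
  qed (simp add: principal_factor_inverses_None)
qed

lemma permutation_matching_J_class:
  assumes c: "c \<in> S" and \<phi>: "permutation_matching S m \<phi>"
  shows "bij_betw \<phi> (J_class c) (J_class c)"
proof -
  have "\<phi> ` J_class c \<subseteq> J_class c"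
    using inverse_in_J_class(1)[OF c] \<phi> J_class_subset unfolding permutation_matching_def by blast
  moreover have "inj_on \<phi> (J_class c)"
    using \<phi> J_class_subset unfolding permutation_matching_def bij_betw_def
    by (blast intro: inj_on_subset)
  moreover have "finite (J_class c)" using finite J_class_subset finite_subset by blast
  ultimately show ?thesis unfolding bij_betw_def using endo_inj_surj by blast
qed

lemma principal_factor_permutation_matching:
  assumes c: "c \<in> S" and \<phi>: "permutation_matching S m \<phi>"
  shows "permutation_matching (principal_factor (J_class c)) (pf_mult (J_class c)) (map_option \<phi>)"
proof -
  let ?J = "J_class c"
  have bij: "inj_on \<phi> ?J" "\<phi> ` ?J = ?J"
    using permutation_matching_J_class[OF c \<phi>] unfolding bij_betw_def by auto
  have "map_option \<phi> ` Some ` ?J = Some ` \<phi> ` ?J" by (simp add: image_image)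
  with bij(2) have "map_option \<phi> ` principal_factor ?J = principal_factor ?J"
    unfolding principal_factor_def by simp
  moreover have "inj_on (map_option \<phi>) (principal_factor ?J)"
    using bij(1) unfolding principal_factor_def inj_on_def by auto
  ultimately have "bij_betw (map_option \<phi>) (principal_factor ?J) (principal_factor ?J)"
    unfolding bij_betw_def by blast
  moreover have "map_option \<phi> X \<in> inverses (principal_factor ?J) (pf_mult ?J) X"
    if X: "X \<in> principal_factor ?J" for X
  proof (cases X)
    case (Some x)
    with X have x: "x \<in> ?J" unfolding principal_factor_def by auto
    then have "\<phi> x \<in> inverses S m x"
      using \<phi> subsetD[OF J_class_subset] unfolding permutation_matching_def by blast
    then show ?thesis using principal_factor_inverses_Some[OF c x] Some by auto
  qed (simp add: principal_factor_inverses_None)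
  ultimately show ?thesis unfolding permutation_matching_def by blast
qed

lemma involution_matching_from_principal_factors:
  assumes "\<forall>c\<in>S. \<exists>\<chi>. involution_matching (principal_factor (J_class c)) (pf_mult (J_class c)) \<chi>"
  shows "\<exists>\<psi>. involution_matching S m \<psi>"
proof -
  have "\<forall>J\<in>J_class ` S. \<exists>\<chi>. involution_matching (principal_factor J) (pf_mult J) \<chi>"
    using assms by blast
  from bchoice[OF this] obtain \<chi> where
    "\<forall>J\<in>J_class ` S. involution_matching (principal_factor J) (pf_mult J) (\<chi> J)" ..
  then have \<chi>:
    "involution_matching (principal_factor (J_class x)) (pf_mult (J_class x)) (\<chi> (J_class x))"
    if "x \<in> S" for x
    using that by blast
  define \<psi> where "\<psi> x = the (\<chi> (J_class x) (Some x))" for x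
  have Some_mem: "Some x \<in> principal_factor (J_class x)" if "x \<in> S" for x
    unfolding principal_factor_def using J_class_self[OF that] by blast
  have \<psi>: "\<chi> (J_class x) (Some x) = Some (\<psi> x) \<and> \<psi> x \<in> inverses S m x" if x: "x \<in> S" for x
  proof -
    have "\<chi> (J_class x) (Some x) \<in>
        inverses (principal_factor (J_class x)) (pf_mult (J_class x)) (Some x)"
      using \<chi>[OF x] Some_mem[OF x]
      unfolding involution_matching_def permutation_matching_def by blast
    then show ?thesis
      unfolding principal_factor_inverses_Some[OF x J_class_self[OF x]] \<psi>_def by auto
  qed
  have invol: "\<psi> (\<psi> x) = x" if x: "x \<in> S" for x
  proof -
    have "J_class (\<psi> x) = J_class x"
      using J_class_eq[OF x] inverse_in_J_class(1)[OF x J_class_self[OF x]] \<psi>[OF x] by blast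
    moreover have "\<chi> (J_class x) (\<chi> (J_class x) (Some x)) = Some x"
      using \<chi>[OF x] Some_mem[OF x] unfolding involution_matching_def by blast
    ultimately show ?thesis using \<psi>[OF x] unfolding \<psi>_def by simp
  qed
  have "involution_matching S m \<psi>"
    by (rule involution_matchingI) (simp_all add: \<psi> invol)
  then show ?thesis by blast
qed

lemma perm_not_inv_principal_factor:
  assumes pni: "perm_not_inv S m"
  shows "\<exists>c\<in>S. perm_not_inv (principal_factor (J_class c)) (pf_mult (J_class c))"
proof (rule ccontr)
  assume no_factor: "\<not> ?thesis"
  obtain \<phi> where \<phi>: "permutation_matching S m \<phi>" using pni unfolding perm_not_inv_def by blast
  then have "\<forall>c\<in>S. \<exists>\<chi>. involution_matching (principal_factor (J_class c)) (pf_mult (J_class c)) \<chi>"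
    using no_factor principal_factor_permutation_matching unfolding perm_not_inv_def by blast
  then show False
    using involution_matching_from_principal_factors pni unfolding perm_not_inv_def by blast
qed

lemma isolated_point_self_inverse:
  assumes c: "c \<in> S" and S: "S = insert z (J_class c)" and z: "z \<notin> J_class c"
  shows "z \<in> inverses S m z"
proof -
  have zS: "z \<in> S" using S by blast
  obtain y where y: "y \<in> inverses S m z" using inverse_exists[OF zS] by blast
  have "y = z"
  proof (rule ccontr)
    assume "y \<noteq> z"
    then have "y \<in> J_class c" using S y unfolding inverses_iff by blast
    moreover have "y \<in> J_class z" using inverse_in_J_class(1)[OF zS J_class_self[OF zS] y] .
    ultimately show False using J_class_eq[OF c] J_class_eq[OF zS] J_class_self[OF zS] z by metis
  qed
  with y show ?thesis by simp
qed

lemma closed_J_class_counterexample: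
  assumes pni: "perm_not_inv S m" and c: "c \<in> S"
    and S: "S = insert z (J_class c)" and z: "z \<notin> J_class c"
    and closed: "\<forall>x\<in>J_class c. \<forall>y\<in>J_class c. x \<cdot> y \<in> J_class c"
  shows "semigroup_on (J_class c) m" "regular_sg (J_class c) m" "perm_not_inv (J_class c) m"
proof -
  let ?J = "J_class c"
  show "semigroup_on ?J m"
    unfolding semigroup_on_def using closed J_class_subset by (auto simp: subset_iff)
  have inv: "inverses ?J m x = inverses S m x" if "x \<in> ?J" for x
    using inverse_in_J_class(1)[OF c that] J_class_subset unfolding inverses_def by blast
  show "regular_sg ?J m"
    unfolding regular_sg_def
  proof
    fix x assume "x \<in> ?J"
    then show "inverses ?J m x \<noteq> {}" using inv inverse_exists J_class_subset by blast
  qed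
  obtain \<phi> where \<phi>: "permutation_matching S m \<phi>" using pni unfolding perm_not_inv_def by blast
  then have "permutation_matching ?J m \<phi>"
    using permutation_matching_J_class[OF c \<phi>] inv subsetD[OF J_class_subset]
    unfolding permutation_matching_def by auto
  moreover have "\<not> (\<exists>\<psi>. involution_matching ?J m \<psi>)"
  proof
    assume "\<exists>\<psi>. involution_matching ?J m \<psi>"
    then obtain \<psi> where \<psi>: "involution_matching ?J m \<psi>" by blast
    have "\<psi> x \<in> ?J" "\<psi> x \<in> inverses S m x" "\<psi> (\<psi> x) = x" if "x \<in> ?J" for x
      using \<psi> that inv
      unfolding involution_matching_def permutation_matching_def bij_betw_def by auto
    then have "involution_matching S m (\<psi>(z := z))"
      using isolated_point_self_inverse[OF c S z] z S by (intro involution_matchingI) auto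
    then show False using pni unfolding perm_not_inv_def by blast
  qed
  ultimately show "perm_not_inv ?J m" unfolding perm_not_inv_def by blast
qed

lemma extra_point_is_zero:
  assumes c: "c \<in> S" and S: "S = insert z (J_class c)" and z: "z \<notin> J_class c"
    and x: "x \<in> J_class c" and y: "y \<in> J_class c" and xy: "x \<cdot> y \<notin> J_class c"
    and s: "s \<in> S"
  shows "z \<cdot> s = z" "s \<cdot> z = z"
proof -
  have xyS: "x \<in> S" "y \<in> S" using x y J_class_subset by auto
  have zxy: "z = x \<cdot> y" using xy S xyS by auto
  have zS: "z \<in> S" using S by auto
  have "J_le z x" using J_le_mult_right xyS zxy by auto
  have notJ: "e \<notin> J_class c" if e: "e \<in> S" "J_le e z" for e
  proof
    assume "e \<in> J_class c"
    then have "z \<in> J_class c" using J_class_convex[OF c _ x zS] e(2) \<open>J_le z x\<close> by blast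
    with z show False by contradiction
  qed
  have "z \<cdot> s \<in> S" "z \<cdot> s \<notin> J_class c" using notJ J_le_mult_right[OF zS s] s zS by auto
  then show "z \<cdot> s = z" using S by blast
  have "s \<cdot> z \<in> S" "s \<cdot> z \<notin> J_class c" using notJ J_le_mult_left[OF s zS] s zS by auto
  then show "s \<cdot> z = z" using S by blast
qed

end

section \<open>Completely 0-simple semigroups\<close>

locale completely_0_simple = finite_regular_semigroup +
  fixes z :: 'a and D :: "'a set"
  assumes S_eq: "S = insert z D" and zero_notin: "z \<notin> D"
    and zero_left: "s \<in> S \<Longrightarrow> z \<cdot> s = z" and zero_right: "s \<in> S \<Longrightarrow> s \<cdot> z = z"
    and J_le_D: "x \<in> D \<Longrightarrow> y \<in> D \<Longrightarrow> J_le x y" and D_nonempty: "D \<noteq> {}"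
begin

lemma zero_in [simp]: "z \<in> S"
  using S_eq by blast

lemma D_subset: "x \<in> D \<Longrightarrow> x \<in> S"
  using S_eq by blast

lemma in_D: "x \<in> S \<Longrightarrow> x \<noteq> z \<Longrightarrow> x \<in> D"
  using S_eq by blast

lemma D_nonzero: "x \<in> D \<Longrightarrow> x \<noteq> z"
  using zero_notin by blast

lemma finite_D: "finite D"
  using finite S_eq by simp

lemma mult_R_rel:
  assumes x: "x \<in> D" and y: "y \<in> D" and nz: "x \<cdot> y \<noteq> z"
  shows "R_rel (x \<cdot> y) x"
proof -
  have xy: "x \<cdot> y \<in> D" using in_D nz D_subset x y by simp
  have "R_le (x \<cdot> y) x" unfolding R_le_def using D_subset y by blast
  then show ?thesis
    unfolding R_rel_def using R_le_stable[of "x \<cdot> y" x] J_le_D[OF x xy] D_subset x xy by blast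
qed

lemma mult_L_rel:
  assumes x: "x \<in> D" and y: "y \<in> D" and nz: "x \<cdot> y \<noteq> z"
  shows "L_rel (x \<cdot> y) y"
proof -
  have xy: "x \<cdot> y \<in> D" using in_D nz D_subset x y by simp
  have "L_le (x \<cdot> y) y" unfolding L_le_def using D_subset x by blast
  then show ?thesis
    unfolding L_rel_def using L_le_stable[of "x \<cdot> y" y] J_le_D[OF y xy] D_subset y xy by blast
qed

lemma mult_nonzero_mono:
  assumes "x \<in> S" "x' \<in> S" "y \<in> S" "y' \<in> S" and "L_le x x'" "R_le y y'" and "x \<cdot> y \<noteq> z"
  shows "x' \<cdot> y' \<noteq> z"
proof
  assume zero: "x' \<cdot> y' = z"
  obtain u v where "u \<in> S" "x = u \<cdot> x'" "v \<in> S" "y = y' \<cdot> v"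
    using assms(5,6) unfolding L_le_def R_le_def by blast
  then have "x \<cdot> y = u \<cdot> (x' \<cdot> y') \<cdot> v" using assms(1-4) by simp
  with zero \<open>u \<in> S\<close> \<open>v \<in> S\<close> assms(7) show False by (simp add: zero_left zero_right)
qed

lemma R_L_meet:
  assumes x: "x \<in> D" and y: "y \<in> D"
  shows "\<exists>w\<in>D. R_rel w x \<and> L_rel w y"
proof -
  obtain u v where uv: "u \<in> S" "v \<in> S" "y = u \<cdot> x \<cdot> v" using J_le_D[OF y x] J_le_def by blast
  define w where "w = x \<cdot> v"
  have wS: "w \<in> S" using w_def uv D_subset x by auto
  have yw: "y = u \<cdot> w" using uv D_subset x w_def by simp
  then have "w \<noteq> z" using D_nonzero[OF y] uv(1) zero_right by auto
  then have wD: "w \<in> D" using in_D wS by blast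
  have "R_le w x" unfolding R_le_def w_def using uv by blast
  then have "R_rel w x"
    unfolding R_rel_def using R_le_stable[of w x] J_le_D[OF x wD] wS D_subset x by blast
  moreover have "L_le y w" unfolding L_le_def using yw uv by blast
  then have "L_rel w y"
    unfolding L_rel_def using L_le_stable[of y w] J_le_D[OF wD y] wS D_subset y by blast
  ultimately show ?thesis using wD by blast
qed

lemma inverse_in_D:
  assumes x: "x \<in> D" and y: "y \<in> inverses S m x"
  shows "y \<in> D" "x \<cdot> y \<noteq> z" "y \<cdot> x \<noteq> z"
proof -
  have yS: "y \<in> S" and xyx: "x \<cdot> y \<cdot> x = x" using y unfolding inverses_iff by auto
  have xS: "x \<in> S" using D_subset[OF x] .
  show xy: "x \<cdot> y \<noteq> z" using xyx D_nonzero[OF x] xS zero_left by auto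
  show yx: "y \<cdot> x \<noteq> z" using xyx D_nonzero[OF x] xS yS zero_right by (metis assoc)
  show "y \<in> D" using yx xS zero_left in_D yS by auto
qed

lemma inverse_in_H_class_D:
  assumes x: "x \<in> D" and w: "w \<in> D" and "x \<cdot> w \<noteq> z" and "w \<cdot> x \<noteq> z"
  shows "\<exists>y\<in>inverses S m x. H_rel y w"
proof -
  have "x \<cdot> w \<in> D" "w \<cdot> x \<in> D" using in_D assms D_subset by auto
  then show ?thesis using inverse_in_H_class[OF D_subset[OF x] D_subset[OF w]] J_le_D x w by blast
qed

definition R_rep :: "'a \<Rightarrow> 'a" where "R_rep x = (SOME r. r \<in> D \<and> R_rel r x)"
definition L_rep :: "'a \<Rightarrow> 'a" where "L_rep x = (SOME r. r \<in> D \<and> L_rel r x)"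

lemma R_rep: "x \<in> D \<Longrightarrow> R_rep x \<in> D \<and> R_rel (R_rep x) x"
  unfolding R_rep_def by (rule someI[of _ x]) (use R_rel_refl D_subset in blast)

lemma L_rep: "x \<in> D \<Longrightarrow> L_rep x \<in> D \<and> L_rel (L_rep x) x"
  unfolding L_rep_def by (rule someI[of _ x]) (use L_rel_refl D_subset in blast)

lemma R_rep_eq_iff:
  assumes x: "x \<in> D" and y: "y \<in> D"
  shows "R_rep x = R_rep y \<longleftrightarrow> R_rel x y"
proof
  assume "R_rep x = R_rep y"
  then show "R_rel x y" using R_rep[OF x] R_rep[OF y] R_rel_trans R_rel_sym D_subset x y by metis
next
  assume "R_rel x y"
  then have "(\<lambda>r. r \<in> D \<and> R_rel r x) = (\<lambda>r. r \<in> D \<and> R_rel r y)"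
    using R_rel_trans R_rel_sym D_subset x y by (intro ext) blast
  then show "R_rep x = R_rep y" unfolding R_rep_def by simp
qed

lemma L_rep_eq_iff:
  assumes x: "x \<in> D" and y: "y \<in> D"
  shows "L_rep x = L_rep y \<longleftrightarrow> L_rel x y"
proof
  assume "L_rep x = L_rep y"
  then show "L_rel x y" using L_rep[OF x] L_rep[OF y] L_rel_trans L_rel_sym D_subset x y by metis
next
  assume "L_rel x y"
  then have "(\<lambda>r. r \<in> D \<and> L_rel r x) = (\<lambda>r. r \<in> D \<and> L_rel r y)"
    using L_rel_trans L_rel_sym D_subset x y by (intro ext) blast
  then show "L_rep x = L_rep y" unfolding L_rep_def by simp
qed

text \<open>Whether \<open>x \<cdot> y\<close> vanishes depends only on the L-class of \<open>x\<close> and the R-class of \<open>y\<close>, so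
  \<open>sandwich\<close> is the sandwich matrix of the Rees representation.\<close>

definition rees_coord :: "'a \<Rightarrow> ('a \<times> 'a) option" where
  "rees_coord x = (if x = z then None else Some (R_rep x, L_rep x))"

definition sandwich :: "'a \<Rightarrow> 'a \<Rightarrow> bool" where "sandwich l i \<longleftrightarrow> l \<cdot> i \<noteq> z"

lemma rees_coord_zero [simp]: "rees_coord z = None"
  unfolding rees_coord_def by simp

lemma rees_coord_D: "x \<in> D \<Longrightarrow> rees_coord x = Some (R_rep x, L_rep x)"
  unfolding rees_coord_def using D_nonzero by simp

lemma rees_coord_eq_iff:
  "x \<in> D \<Longrightarrow> y \<in> D \<Longrightarrow> rees_coord x = rees_coord y \<longleftrightarrow> H_rel x y"
  unfolding H_rel_def using R_rep_eq_iff L_rep_eq_iff rees_coord_D by auto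

lemma mult_nonzero_iff_sandwich:
  assumes x: "x \<in> D" and y: "y \<in> D"
  shows "x \<cdot> y \<noteq> z \<longleftrightarrow> sandwich (L_rep x) (R_rep y)"
proof -
  have reps: "L_rep x \<in> D" "L_rel (L_rep x) x" "R_rep y \<in> D" "R_rel (R_rep y) y"
    using L_rep[OF x] R_rep[OF y] by auto
  then show ?thesis
    unfolding sandwich_def L_rel_def R_rel_def
    using mult_nonzero_mono[of x "L_rep x" y "R_rep y"]
      mult_nonzero_mono[of "L_rep x" x "R_rep y" y]
      D_subset x y by blast
qed

lemma rees_coord_mult:
  assumes x: "x \<in> S" and y: "y \<in> S"
  shows "rees_coord (x \<cdot> y) = rees_mult sandwich (rees_coord x) (rees_coord y)"
proof (cases "x = z \<or> y = z")
  case True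
  then show ?thesis
    using x y by (auto simp: zero_left zero_right rees_mult_def split: option.split)
next
  case False
  then have xD: "x \<in> D" and yD: "y \<in> D" using in_D x y by auto
  show ?thesis
  proof (cases "x \<cdot> y = z")
    case True
    then show ?thesis
      using mult_nonzero_iff_sandwich[OF xD yD] by (simp add: rees_coord_D xD yD rees_mult_def)
  next
    case False
    then have xyD: "x \<cdot> y \<in> D" using in_D x y by auto
    have "R_rep (x \<cdot> y) = R_rep x"
      using R_rep_eq_iff[OF xyD xD] mult_R_rel[OF xD yD False] by simp
    moreover have "L_rep (x \<cdot> y) = L_rep y"
      using L_rep_eq_iff[OF xyD yD] mult_L_rel[OF xD yD False] by simp
    ultimately show ?thesis
      using mult_nonzero_iff_sandwich[OF xD yD] False
      by (simp add: rees_coord_D xD yD xyD rees_mult_def)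
  qed
qed

lemma rees_coord_image: "rees_coord ` S = insert None (Some ` (R_rep ` D \<times> L_rep ` D))"
proof (intro equalityI subsetI)
  fix b assume "b \<in> rees_coord ` S"
  then show "b \<in> insert None (Some ` (R_rep ` D \<times> L_rep ` D))"
    using in_D unfolding rees_coord_def by auto
next
  fix b assume "b \<in> insert None (Some ` (R_rep ` D \<times> L_rep ` D))"
  then consider "b = None" | x y where "x \<in> D" "y \<in> D" "b = Some (R_rep x, L_rep y)"
    by blast
  then show "b \<in> rees_coord ` S"
  proof cases
    case 1
    then show ?thesis using rees_coord_zero zero_in by (metis image_eqI)
  next
    case 2
    obtain w where w: "w \<in> D" "R_rel w x" "L_rel w y" using R_L_meet[OF 2(1,2)] by blast
    then have "rees_coord w = b"
      using R_rep_eq_iff[OF w(1) 2(1)] L_rep_eq_iff[OF w(1) 2(2)] 2(3) by (simp add: rees_coord_D)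
    then show ?thesis using D_subset[OF w(1)] by blast
  qed
qed

lemma sandwich_regular:
  shows "\<forall>l\<in>L_rep ` D. \<exists>i\<in>R_rep ` D. sandwich l i"
    and "\<forall>i\<in>R_rep ` D. \<exists>l\<in>L_rep ` D. sandwich l i"
proof -
  have "\<exists>y. y \<in> D \<and> x \<cdot> y \<noteq> z \<and> y \<cdot> x \<noteq> z" if x: "x \<in> D" for x
    using inverse_exists[OF D_subset[OF x]] inverse_in_D[OF x] by blast
  then show "\<forall>l\<in>L_rep ` D. \<exists>i\<in>R_rep ` D. sandwich l i"
    and "\<forall>i\<in>R_rep ` D. \<exists>l\<in>L_rep ` D. sandwich l i"
    using mult_nonzero_iff_sandwich by blast+
qed

lemma zero_rectangular_band_if_H_trivial:
  assumes H_trivial: "\<And>x y. x \<in> D \<Longrightarrow> y \<in> D \<Longrightarrow> H_rel x y \<Longrightarrow> x = y"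
  shows "zero_rectangular_band S m"
proof -
  have "inj_on rees_coord S"
  proof (rule inj_onI)
    fix x y assume xy: "x \<in> S" "y \<in> S" "rees_coord x = rees_coord y"
    then show "x = y"
      using in_D rees_coord_eq_iff H_trivial unfolding rees_coord_def by (metis option.distinct(1))
  qed
  then have "bij_betw rees_coord S (insert None (Some ` (R_rep ` D \<times> L_rep ` D)))"
    unfolding bij_betw_def using rees_coord_image by blast
  moreover have "R_rep ` D \<noteq> {}" "L_rep ` D \<noteq> {}" using D_nonempty by auto
  ultimately show ?thesis
    unfolding zero_rectangular_band_def using sandwich_regular rees_coord_mult
    by (intro exI[of _ "R_rep ` D"] exI[of _ "L_rep ` D"] exI[of _ sandwich]
        exI[of _ rees_coord] conjI) simp_all
qed

end

lemma (in finite_regular_semigroup) completely_0_simple_if_minimal: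
  assumes pni: "perm_not_inv S m" and c: "c \<in> S"
    and S: "S = insert z (J_class c)" and z: "z \<notin> J_class c"
    and minimal: "\<And>(T :: 'a set) n.
        finite T \<Longrightarrow> semigroup_on T n \<Longrightarrow> regular_sg T n \<Longrightarrow> perm_not_inv T n \<Longrightarrow> card S \<le> card T"
  shows "completely_0_simple S m z (J_class c)"
proof -
  let ?J = "J_class c"
  have "finite ?J" using J_class_subset finite finite_subset by blast
  have "\<not> (\<forall>x\<in>?J. \<forall>y\<in>?J. x \<cdot> y \<in> ?J)"
  proof
    assume "\<forall>x\<in>?J. \<forall>y\<in>?J. x \<cdot> y \<in> ?J"
    then have "card S \<le> card ?J"
      using closed_J_class_counterexample[OF pni c S z] minimal \<open>finite ?J\<close> by blast
    moreover have "card S = card ?J + 1"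
      using S z \<open>finite ?J\<close> by (metis card_insert_disjoint Suc_eq_plus1)
    ultimately show False by simp
  qed
  then obtain x y where "x \<in> ?J" "y \<in> ?J" "x \<cdot> y \<notin> ?J" by blast
  then show ?thesis
    using extra_point_is_zero[OF c S z] J_class_J_le[OF c] J_class_self[OF c] S z
    by unfold_locales blast+
qed

section \<open>Collapsing the H-classes\<close>

lemma rees_mult_inverses_Some:
  "Some (j, u) \<in> inverses C (rees_mult P) (Some (i, l)) \<longleftrightarrow> Some (j, u) \<in> C \<and> P l j \<and> P u i"
  unfolding inverses_def rees_mult_def by auto

lemma rees_mult_inverses_None: "None \<notin> inverses C (rees_mult P) (Some p)"
  unfolding inverses_def rees_mult_def by (auto split: prod.splits)

context completely_0_simple
begin

definition H_class :: "'a \<Rightarrow> 'a set" where "H_class w = {x \<in> D. H_rel x w}"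

lemma finite_H_class: "finite (H_class w)"
  unfolding H_class_def using finite_D by simp

lemma H_class_eq_fiber: "w \<in> D \<Longrightarrow> H_class w = {x \<in> D. rees_coord x = rees_coord w}"
  unfolding H_class_def using rees_coord_eq_iff by blast

lemma card_H_class_le_if_R_rel:
  assumes w1: "w1 \<in> D" and w2: "w2 \<in> D" and R: "R_rel w1 w2"
  shows "card (H_class w1) \<le> card (H_class w2)"
proof -
  obtain s t where s: "s \<in> S" "w2 = w1 \<cdot> s" and t: "t \<in> S" "w1 = w2 \<cdot> t"
    using R unfolding R_rel_def R_le_def by blast
  have w: "w1 \<in> S" "w2 \<in> S" using w1 w2 D_subset by auto
  have w1st: "w1 \<cdot> (s \<cdot> t) = w1" using s t w by (metis assoc)
  have maps: "x \<cdot> s \<in> H_class w2 \<and> x \<cdot> s \<cdot> t = x" if x: "x \<in> H_class w1" for x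
  proof -
    have xD: "x \<in> D" and xH: "H_rel x w1" using x unfolding H_class_def by auto
    have xS: "x \<in> S" using D_subset xD by blast
    obtain u v where u: "u \<in> S" "x = u \<cdot> w1" and v: "v \<in> S" "w1 = v \<cdot> x"
      using xH unfolding H_rel_def L_rel_def L_le_def by blast
    have cancel: "x \<cdot> s \<cdot> t = x" using u w s(1) t(1) w1st by simp
    then have "x \<cdot> s \<noteq> z" using D_nonzero[OF xD] zero_left[OF t(1)] by auto
    then have xsD: "x \<cdot> s \<in> D" using in_D xS s(1) by simp
    have "R_le (x \<cdot> s) x" "R_le x (x \<cdot> s)"
      unfolding R_le_def using s(1) t(1) cancel[symmetric] by blast+
    then have "R_rel (x \<cdot> s) w2"
      using xH R R_rel_trans xS w s(1) unfolding R_rel_def H_rel_def by (meson closed)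
    moreover have "x \<cdot> s = u \<cdot> w2" using u(1) w s by (simp add: u(2))
    moreover have "w2 = v \<cdot> (x \<cdot> s)" using v(1) xS s(1) by (simp add: s(2) v(2))
    ultimately have "H_rel (x \<cdot> s) w2"
      unfolding H_rel_def L_rel_def L_le_def using u(1) v(1) by blast
    with xsD cancel show ?thesis unfolding H_class_def by blast
  qed
  have "inj_on (\<lambda>x. x \<cdot> s) (H_class w1)"
    by (rule inj_onI) (metis maps)
  moreover have "(\<lambda>x. x \<cdot> s) ` H_class w1 \<subseteq> H_class w2" using maps by blast
  ultimately show ?thesis using card_inj_on_le finite_H_class by blast
qed

lemma card_H_class_le_if_L_rel:
  assumes w1: "w1 \<in> D" and w2: "w2 \<in> D" and L: "L_rel w1 w2"
  shows "card (H_class w1) \<le> card (H_class w2)"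
proof -
  obtain s t where s: "s \<in> S" "w2 = s \<cdot> w1" and t: "t \<in> S" "w1 = t \<cdot> w2"
    using L unfolding L_rel_def L_le_def by blast
  have w: "w1 \<in> S" "w2 \<in> S" using w1 w2 D_subset by auto
  have tsw1: "t \<cdot> s \<cdot> w1 = w1" using s t w by (metis assoc)
  have maps: "s \<cdot> x \<in> H_class w2 \<and> t \<cdot> (s \<cdot> x) = x" if x: "x \<in> H_class w1" for x
  proof -
    have xD: "x \<in> D" and xH: "H_rel x w1" using x unfolding H_class_def by auto
    have xS: "x \<in> S" using D_subset xD by blast
    obtain u v where u: "u \<in> S" "x = w1 \<cdot> u" and v: "v \<in> S" "w1 = x \<cdot> v"
      using xH unfolding H_rel_def R_rel_def R_le_def by blast
    have "t \<cdot> (s \<cdot> x) = (t \<cdot> s \<cdot> w1) \<cdot> u" using u w s(1) t(1) by (simp add: u(2))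
    also have "\<dots> = x" by (simp only: tsw1 u(2))
    finally have cancel: "t \<cdot> (s \<cdot> x) = x" .
    then have "s \<cdot> x \<noteq> z" using D_nonzero[OF xD] zero_right[OF t(1)] by auto
    then have sxD: "s \<cdot> x \<in> D" using in_D xS s(1) by simp
    have "L_le (s \<cdot> x) x" "L_le x (s \<cdot> x)"
      unfolding L_le_def using s(1) t(1) cancel[symmetric] by blast+
    then have "L_rel (s \<cdot> x) w2"
      using xH L L_rel_trans xS w s(1) unfolding L_rel_def H_rel_def by (meson closed)
    moreover have "s \<cdot> x = w2 \<cdot> u" using u(1) w s by (simp add: u(2))
    moreover have "w2 = (s \<cdot> x) \<cdot> v" using v(1) xS s(1) by (simp add: s(2) v(2))
    ultimately have "H_rel (s \<cdot> x) w2"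
      unfolding H_rel_def R_rel_def R_le_def using u(1) v(1) by blast
    with sxD cancel show ?thesis unfolding H_class_def by blast
  qed
  have "inj_on (\<lambda>x. s \<cdot> x) (H_class w1)"
    by (rule inj_onI) (metis maps)
  moreover have "(\<lambda>x. s \<cdot> x) ` H_class w1 \<subseteq> H_class w2" using maps by blast
  ultimately show ?thesis using card_inj_on_le finite_H_class by blast
qed

lemma card_H_class_eq:
  assumes w1: "w1 \<in> D" and w2: "w2 \<in> D"
  shows "card (H_class w1) = card (H_class w2)"
proof -
  obtain w where w: "w \<in> D" "R_rel w w1" "L_rel w w2" using R_L_meet[OF w1 w2] by blast
  have "card (H_class w1) = card (H_class w)"
    using card_H_class_le_if_R_rel[OF w1 w(1) R_rel_sym[OF w(2)]]
      card_H_class_le_if_R_rel[OF w(1) w1 w(2)] by simp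
  also have "\<dots> = card (H_class w2)"
    using card_H_class_le_if_L_rel[OF w(1) w2 w(3)]
      card_H_class_le_if_L_rel[OF w2 w(1) L_rel_sym[OF w(3)]] by simp
  finally show ?thesis .
qed

abbreviation H_quotient :: "('a \<times> 'a) option set" where "H_quotient \<equiv> rees_coord ` S"

lemma H_quotient_eq: "H_quotient = insert None (rees_coord ` D)"
  using image_insert[of rees_coord z D] S_eq rees_coord_zero by metis

lemma H_quotient_semigroup: "semigroup_on H_quotient (rees_mult sandwich)"
  using semigroup_on_image[where h = rees_coord and n = "rees_mult sandwich",
      OF semigroup rees_coord_mult] .

lemma H_quotient_regular: "regular_sg H_quotient (rees_mult sandwich)"
  using regular_sg_image[where h = rees_coord and n = "rees_mult sandwich",
      OF semigroup rees_coord_mult regular] .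

lemma H_quotient_inverse_iff:
  assumes x: "x \<in> D" and w: "w \<in> D"
  shows "rees_coord w \<in> inverses H_quotient (rees_mult sandwich) (rees_coord x) \<longleftrightarrow>
    x \<cdot> w \<noteq> z \<and> w \<cdot> x \<noteq> z"
proof -
  have "rees_coord w \<in> H_quotient" using D_subset[OF w] by blast
  then show ?thesis
    using mult_nonzero_iff_sandwich[OF x w] mult_nonzero_iff_sandwich[OF w x]
    by (simp add: rees_coord_D x w rees_mult_inverses_Some)
qed

lemma H_quotient_inverses_nonzero:
  assumes x: "x \<in> D" and b: "b \<in> inverses H_quotient (rees_mult sandwich) (rees_coord x)"
  shows "\<exists>w\<in>D. b = rees_coord w"
proof -
  have "b \<noteq> None" using b rees_mult_inverses_None rees_coord_D[OF x] by metis
  moreover have "b \<in> H_quotient" using b unfolding inverses_def by blast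
  ultimately show ?thesis using H_quotient_eq by auto
qed

lemma card_rees_coord_preimage:
  assumes K: "K \<subseteq> rees_coord ` D" and w: "w \<in> D"
  shows "card {x \<in> D. rees_coord x \<in> K} = card (H_class w) * card K"
proof -
  have "finite K" using K finite_D finite_subset by blast
  have "{x \<in> D. rees_coord x \<in> K} = (\<Union>b\<in>K. {x \<in> D. rees_coord x = b})" by blast
  also have "card \<dots> = (\<Sum>b\<in>K. card {x \<in> D. rees_coord x = b})"
    using \<open>finite K\<close> finite_D by (intro card_UN_disjoint) auto
  also have "\<dots> = (\<Sum>b\<in>K. card (H_class w))"
  proof (rule sum.cong)
    fix b assume "b \<in> K"
    then obtain v where v: "v \<in> D" "b = rees_coord v" using K by blast
    then have "{x \<in> D. rees_coord x = b} = H_class v" using H_class_eq_fiber by simp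
    then show "card {x \<in> D. rees_coord x = b} = card (H_class w)"
      using card_H_class_eq[OF v(1) w] by simp
  qed simp
  finally show ?thesis by simp
qed

lemma H_quotient_hall_condition:
  assumes \<phi>: "permutation_matching S m \<phi>"
  shows "hall_condition (rees_coord ` D)
    (\<lambda>b. inverses H_quotient (rees_mult sandwich) b \<inter> rees_coord ` D)"
  unfolding hall_condition_def
proof (intro allI impI)
  fix K assume K: "K \<subseteq> rees_coord ` D"
  define N where "N = (\<Union>b\<in>K. inverses H_quotient (rees_mult sandwich) b \<inter> rees_coord ` D)"
  have N: "N \<subseteq> rees_coord ` D" unfolding N_def by blast
  obtain w where w: "w \<in> D" using D_nonempty by blast
  \<comment> \<open>Both sides are unions of H-classes, all of the same size as \<open>H_class w\<close>.\<close>
  have "\<phi> ` {x \<in> D. rees_coord x \<in> K} \<subseteq> {x \<in> D. rees_coord x \<in> N}"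
  proof (intro image_subsetI)
    fix x assume x: "x \<in> {x \<in> D. rees_coord x \<in> K}"
    then have xD: "x \<in> D" by blast
    have inv: "\<phi> x \<in> inverses S m x"
      using \<phi> D_subset[OF xD] unfolding permutation_matching_def by blast
    then have "\<phi> x \<in> D" using inverse_in_D[OF xD] by blast
    moreover have "rees_coord (\<phi> x) \<in> inverses H_quotient (rees_mult sandwich) (rees_coord x)"
      using inverses_image[where h = rees_coord and n = "rees_mult sandwich",
          OF semigroup rees_coord_mult D_subset[OF xD] inv] .
    ultimately show "\<phi> x \<in> {x \<in> D. rees_coord x \<in> N}" using x unfolding N_def by blast
  qed
  moreover have "inj_on \<phi> {x \<in> D. rees_coord x \<in> K}"
    using \<phi> D_subset unfolding permutation_matching_def bij_betw_def by (blast intro: inj_on_subset)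
  ultimately have "card {x \<in> D. rees_coord x \<in> K} \<le> card {x \<in> D. rees_coord x \<in> N}"
    using finite_D by (intro card_inj_on_le) auto
  then have "card (H_class w) * card K \<le> card (H_class w) * card N"
    using card_rees_coord_preimage[OF K w] card_rees_coord_preimage[OF N w] by simp
  moreover have "w \<in> H_class w" using w H_rel_refl D_subset unfolding H_class_def by blast
  then have "card (H_class w) > 0" using finite_H_class card_gt_0_iff by blast
  ultimately show "card K \<le> card N" by simp
qed

lemma H_quotient_permutation_matching:
  assumes \<phi>: "permutation_matching S m \<phi>"
  shows "\<exists>\<pi>. permutation_matching H_quotient (rees_mult sandwich) \<pi>"
proof -
  obtain g where g_inj: "inj_on g (rees_coord ` D)"
    and g_inv: "\<And>b. b \<in> rees_coord ` D \<Longrightarrow>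
      g b \<in> inverses H_quotient (rees_mult sandwich) b \<inter> rees_coord ` D"
    using hall_marriage[OF _ H_quotient_hall_condition[OF \<phi>]] finite_D by blast
  define \<pi> where "\<pi> = g(None := None)"
  have None_notin: "None \<notin> rees_coord ` D" using rees_coord_D by auto
  then have \<pi>_g: "\<pi> b = g b" if "b \<in> rees_coord ` D" for b
    using that unfolding \<pi>_def by (metis fun_upd_other)
  have \<pi>_None: "\<pi> None = None" unfolding \<pi>_def by simp
  have "inj_on \<pi> (rees_coord ` D)"
    using g_inj inj_on_cong[of "rees_coord ` D" \<pi> g] \<pi>_g by blast
  moreover have "\<pi> ` rees_coord ` D \<subseteq> rees_coord ` D"
    using g_inv \<pi>_g by auto
  ultimately have inj: "inj_on \<pi> H_quotient" and sub: "\<pi> ` H_quotient \<subseteq> H_quotient"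
    unfolding H_quotient_eq using \<pi>_None None_notin by auto
  have "finite H_quotient" using finite by simp
  then have "bij_betw \<pi> H_quotient H_quotient"
    unfolding bij_betw_def using endo_inj_surj[OF _ sub inj] inj by blast
  moreover have "\<pi> b \<in> inverses H_quotient (rees_mult sandwich) b" if b: "b \<in> H_quotient" for b
  proof (cases "b = None")
    case True
    have "rees_mult sandwich None None = None" by (simp add: rees_mult_def)
    then show ?thesis using b True \<pi>_None unfolding inverses_def by simp
  next
    case False
    then show ?thesis using b g_inv \<pi>_g unfolding H_quotient_eq by auto
  qed
  ultimately show ?thesis unfolding permutation_matching_def by blast
qed

lemma involution_matching_from_H_quotient:
  assumes \<chi>: "involution_matching H_quotient (rees_mult sandwich) \<chi>"
  shows "\<exists>\<psi>. involution_matching S m \<psi>"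
proof -
  have \<chi>_inv: "\<chi> b \<in> inverses H_quotient (rees_mult sandwich) b" and \<chi>_invol: "\<chi> (\<chi> b) = b"
    if "b \<in> H_quotient" for b
    using \<chi> that unfolding involution_matching_def permutation_matching_def by blast+
  have "\<exists>y. y \<in> inverses S m x \<and> rees_coord y = \<chi> (rees_coord x)" if x: "x \<in> D" for x
  proof -
    have b: "\<chi> (rees_coord x) \<in> inverses H_quotient (rees_mult sandwich) (rees_coord x)"
      using \<chi>_inv D_subset[OF x] by blast
    then obtain w where w: "w \<in> D" "\<chi> (rees_coord x) = rees_coord w"
      using H_quotient_inverses_nonzero[OF x] by blast
    then obtain y where y: "y \<in> inverses S m x" "H_rel y w"
      using inverse_in_H_class_D[OF x w(1)] H_quotient_inverse_iff[OF x w(1)] b by auto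
    then have "rees_coord y = rees_coord w"
      using rees_coord_eq_iff inverse_in_D(1)[OF x y(1)] w(1) by blast
    with y w show ?thesis by auto
  qed
  then obtain \<psi>' where \<psi>':
    "\<And>x. x \<in> D \<Longrightarrow> \<psi>' x \<in> inverses S m x \<and> rees_coord (\<psi>' x) = \<chi> (rees_coord x)"
    by metis
  define \<psi> where "\<psi> = \<psi>'(z := z)"
  have inv: "\<psi> x \<in> inverses S m x" if x: "x \<in> S" for x
  proof (cases "x = z")
    case False
    then show ?thesis using \<psi>' in_D x by (simp add: \<psi>_def)
  qed (simp add: \<psi>_def inverses_iff zero_left)
  have "H_rel (\<psi> (\<psi> x)) x" if x: "x \<in> S" for x
  proof (cases "x = z")
    case False
    then have xD: "x \<in> D" using in_D x by blast
    have yD: "\<psi>' x \<in> D" using \<psi>'[OF xD] inverse_in_D(1)[OF xD] by blast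
    have yyD: "\<psi>' (\<psi>' x) \<in> D" using \<psi>'[OF yD] inverse_in_D(1)[OF yD] by blast
    have "\<psi> (\<psi> x) = \<psi>' (\<psi>' x)" using False D_nonzero[OF yD] unfolding \<psi>_def by simp
    moreover have "rees_coord (\<psi>' (\<psi>' x)) = rees_coord x"
      using \<psi>'[OF yD] \<psi>'[OF xD] \<chi>_invol D_subset[OF xD] by simp
    ultimately show ?thesis using rees_coord_eq_iff[OF yyD xD] by simp
  qed (use H_rel_refl in \<open>simp add: \<psi>_def\<close>)
  then show ?thesis using involution_matching_if_H_inverse inv by blast
qed

lemma zero_rectangular_band_if_minimal:
  assumes pni: "perm_not_inv S m"
    and minimal: "\<And>(T :: ('a \<times> 'a) option set) n.
        finite T \<Longrightarrow> semigroup_on T n \<Longrightarrow> regular_sg T n \<Longrightarrow> perm_not_inv T n \<Longrightarrow> card S \<le> card T"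
  shows "zero_rectangular_band S m"
proof (rule zero_rectangular_band_if_H_trivial, rule ccontr)
  fix x y assume x: "x \<in> D" and y: "y \<in> D" and "H_rel x y" and "x \<noteq> y"
  then have "\<not> inj_on rees_coord S"
    using rees_coord_eq_iff[OF x y] D_subset unfolding inj_on_def by blast
  then have "card H_quotient < card S"
    using card_image_le[OF finite, of rees_coord] inj_on_iff_eq_card[OF finite] by fastforce
  moreover have "perm_not_inv H_quotient (rees_mult sandwich)"
    using pni H_quotient_permutation_matching involution_matching_from_H_quotient
    unfolding perm_not_inv_def by blast
  then have "card S \<le> card H_quotient"
    using minimal finite H_quotient_semigroup H_quotient_regular by blast
  ultimately show False by simp
qed

end

theorem proposition2p1:
  fixes S :: "'a set" and m :: "'a \<Rightarrow> 'a \<Rightarrow> 'a"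
  assumes "finite S" and "semigroup_on S m" and "regular_sg S m" and "perm_not_inv S m"
    and minimal: "\<And>(T :: nat set) (n :: nat \<Rightarrow> nat \<Rightarrow> nat).
        finite T \<Longrightarrow> semigroup_on T n \<Longrightarrow> regular_sg T n \<Longrightarrow> perm_not_inv T n \<Longrightarrow>
        card S \<le> card T"
  shows "zero_rectangular_band S m"
proof -
  interpret finite_regular_semigroup S m using assms(1-3) by unfold_locales
  \<comment> \<open>Polymorphic in \<open>'b\<close>: used for subsets of \<open>S\<close>, principal factors and the H-quotient.\<close>
  have smaller_impossible: "card S \<le> card T"
    if "finite T" "semigroup_on T n" "regular_sg T n" "perm_not_inv T n" for T :: "'b set" and n
    using that by (rule card_le_if_minimal) (fact minimal)
  obtain c where c: "c \<in> S"
    and pf: "perm_not_inv (principal_factor (J_class c)) (pf_mult (J_class c))"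
    using perm_not_inv_principal_factor[OF assms(4)] by blast
  have "finite (J_class c)" using J_class_subset finite finite_subset by blast
  then have "card S \<le> card (J_class c) + 1"
    using smaller_impossible[OF _ principal_factor_semigroup[OF c]
        principal_factor_regular[OF c] pf]
      card_principal_factor[of "J_class c"] by (simp add: principal_factor_def)
  moreover have "J_class c \<noteq> S"
    using simple_has_involution_matching J_class_J_le[OF c] assms(4)
    unfolding perm_not_inv_def by metis
  ultimately obtain z where "S = insert z (J_class c)" "z \<notin> J_class c"
    using eq_insert_if_card_le_Suc[OF finite J_class_subset] by blast
  then interpret completely_0_simple S m z "J_class c"
    using completely_0_simple_if_minimal[OF assms(4) c] smaller_impossible by blast
  show ?thesis
    using zero_rectangular_band_if_minimal[OF assms(4)] smaller_impossible by blast
qed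

end
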